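(* Let $R$ be a commutative ring with identity, $n>1$, $S=M_n(R)$. If $A_1,A_2$ are vertices of the orthogonality graph $O(S)$ with $d(A_1,A_2)>3$, then $\operatorname{Ann}(\det A_1)=\operatorname{Ann}(\det A_2)$, and this ideal $I$ has no zero-divisors in the sense that $xy\ne0$ for all nonzero $x,y\in I$.
   Context: The orthogonality graph $O(S)$ of a ring $S$ is the undirected graph whose vertices are the nonzero two-sided zero-divisors of $S$, distinct vertices $x,y$ being adjacent iff $xy=yx=0$; $d$ is the graph distance. $\operatorname{Ann}(a)=\{x\in R: ax=0\}$. *)

theory Defs
  imports "HOL-Analysis.Analysis"
begin

text \<open>Matrices over R of size n are 'a^'n^'n with product (**); note that (*) on this type is
entrywise, so all ring notions for S = M_n(R) are stated with (**).\<close>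

text \<open>Nonzero two-sided zero-divisor of S = M_n(R): the vertices of O(S).\<close>
definition two_sided_zd :: "('a::comm_ring_1)^'n^'n \<Rightarrow> bool" where
  "two_sided_zd A \<longleftrightarrow> A \<noteq> 0 \<and> (\<exists>B::'a^'n^'n. B \<noteq> 0 \<and> A ** B = 0) \<and> (\<exists>C::'a^'n^'n. C \<noteq> 0 \<and> C ** A = 0)"

definition orth_adj :: "('a::comm_ring_1)^'n^'n \<Rightarrow> ('a::comm_ring_1)^'n^'n \<Rightarrow> bool" where
  "orth_adj A B \<longleftrightarrow> two_sided_zd A \<and> two_sided_zd B \<and> A \<noteq> B \<and> A ** B = 0 \<and> B ** A = 0"

text \<open>Graph distance in O(S), infinity if no path exists.\<close>
definition orth_dist :: "('a::comm_ring_1)^'n^'n \<Rightarrow> ('a::comm_ring_1)^'n^'n \<Rightarrow> enat" where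
  "orth_dist A B = (INF k \<in> {k. (orth_adj ^^ k) A B}. enat k)"

definition ann :: "'a::comm_ring_1 \<Rightarrow> 'a set" where
  "ann a = {x. a * x = 0}"

end

theory Submission
  imports Defs
begin

text \<open>The key tool is a McCoy-type lemma: if \<open>x \<noteq> 0\<close> annihilates \<open>det A\<close>, then some
nonzero \<open>X\<close> satisfies \<open>AX = XA = 0\<close> and every entry of \<open>X\<close> is killed by \<open>ann x\<close>. It is
built as \<open>X = x h q\<^sup>T\<close>, where \<open>h\<close> and \<open>q\<close> come from adjugates of low-rank perturbations
\<open>W A + L\<close> via the matrix determinant lemma, by induction on the ranks of the perturbations
whose determinants \<open>x\<close> kills.

Two such matrices \<open>X\<close> (for \<open>A\<^sub>1\<close>) and \<open>Y\<close> (for \<open>A\<^sub>2\<close>) with \<open>XY = YX = 0\<close> give a walk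
\<open>A\<^sub>1 - X - Y - A\<^sub>2\<close>, so \<open>d(A\<^sub>1, A\<^sub>2) \<le> 3\<close>. If \<open>z\<close> kills \<open>det A\<^sub>2\<close> but not \<open>det A\<^sub>1\<close>, take \<open>X\<close>
from any annihilator of \<open>det A\<^sub>1\<close> and \<open>Y\<close> from \<open>z det A\<^sub>1\<close>: the entries of \<open>X\<close> are killed by
\<open>det A\<^sub>1\<close>, hence lie in \<open>ann (z det A\<^sub>1)\<close>, which kills the entries of \<open>Y\<close>. Likewise nonzero
\<open>x, y \<in> ann (det A\<^sub>1)\<close> with \<open>xy = 0\<close> give \<open>X\<close> from \<open>x\<close> and \<open>Y\<close> from \<open>y\<close>.\<close>

definition row_upd :: "'a^'n^'m \<Rightarrow> 'm \<Rightarrow> 'a^'n \<Rightarrow> 'a^'n^'m" where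
  "row_upd A k v = (\<chi> i. if i = k then v else A $ i)"

definition adjugate :: "('a::comm_ring_1)^'n^'n \<Rightarrow> 'a^'n^'n" where
  "adjugate A = (\<chi> j k. det (row_upd A k (axis j 1)))"

definition outer_product :: "('a::times)^'m \<Rightarrow> 'a^'n \<Rightarrow> 'a^'n^'m" where
  "outer_product y z = (\<chi> i j. y $ i * z $ j)"

lemma det_row_upd:
  fixes A :: "'a::comm_ring_1^'n^'n"
  shows "det (row_upd A k v) = scalar_product v (column k (adjugate A))"
proof -
  have "det (row_upd A k v) = det (\<chi> i. if i = k then (\<Sum>j\<in>UNIV. v $ j *s axis j 1) else A $ i)"
    by (simp only: row_upd_def basis_expansion)
  also have "\<dots> = (\<Sum>j\<in>UNIV. v $ j * det (row_upd A k (axis j 1)))"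
    by (simp add: det_linear_row_sum det_row_mul row_upd_def)
  finally show ?thesis
    by (simp add: scalar_product_def column_def adjugate_def)
qed

lemma matrix_mul_adjugate:
  fixes A :: "'a::comm_ring_1^'n^'n"
  shows "A ** adjugate A = mat (det A)"
proof -
  have "(A ** adjugate A) $ i $ k = det (row_upd A k (A $ i))" for i k
    by (simp add: det_row_upd scalar_product_def matrix_matrix_mult_def column_def)
  moreover have "det (row_upd A k (A $ i)) = (if i = k then det A else 0)" for i k
  proof (cases "i = k")
    case True
    then have "row_upd A k (A $ i) = A" by (simp add: row_upd_def vec_eq_iff)
    with True show ?thesis by simp
  next
    case False
    then show ?thesis
      by (simp, intro det_identical_rows[of i k]) (auto simp: row_def row_upd_def vec_eq_iff)
  qed
  ultimately show ?thesis by (simp add: vec_eq_iff mat_def)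
qed

lemma det_mult_entry_eq_0:
  fixes A X :: "'a::comm_ring_1^'n^'n"
  assumes "A ** X = 0"
  shows "det A * X $ i $ j = 0"
proof -
  have "transpose X ** transpose A = 0"
    using assms by (metis matrix_transpose_mul transpose_mat mat_0)
  then have "transpose X ** (transpose A ** adjugate (transpose A)) = 0"
    by (simp add: matrix_mul_assoc)
  then have "transpose X ** mat (det A) = 0"
    by (simp add: matrix_mul_adjugate)
  then have "(transpose X ** mat (det A)) $ j $ i = 0" by simp
  then show ?thesis
    by (simp add: matrix_matrix_mult_def mat_def transpose_def if_distrib if_distribR mult.commute cong: if_cong)
qed

lemma det_add_outer_product_on_rows:
  fixes N :: "'a::comm_ring_1^'n^'n"
  assumes "finite T"
  shows "det (\<chi> r. if r \<in> T then N $ r + y $ r *s z else N $ r)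
    = det N + (\<Sum>k\<in>T. y $ k * det (row_upd N k z))"
  using assms
proof (induction T arbitrary: N rule: finite_induct)
  case empty
  then show ?case by simp
next
  case (insert k T)
  let ?M = "(\<chi> r. if r \<in> T then N $ r + y $ r *s z else N $ r) :: 'a^'n^'n"
  have "(\<chi> r. if r \<in> insert k T then N $ r + y $ r *s z else N $ r) =
      (\<chi> r. if r = k then N $ k + y $ k *s z else ?M $ r)"
    using insert by (auto simp: vec_eq_iff)
  moreover have "(\<chi> r. if r = k then N $ k else ?M $ r) = ?M"
    using insert by (auto simp: vec_eq_iff)
  moreover have "(\<chi> r. if r = k then z else ?M $ r) =
      (\<chi> r. if r \<in> T then row_upd N k z $ r + y $ r *s z else row_upd N k z $ r)"
    using insert by (auto simp: vec_eq_iff row_upd_def)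
  moreover have "det (row_upd (row_upd N k z) r z) = 0" if "r \<in> T" for r
    using insert that
    by (intro det_identical_rows[of r k]) (auto simp: row_def row_upd_def vec_eq_iff)
  ultimately show ?case
    using insert by (simp add: det_row_add det_row_mul algebra_simps)
qed

lemma det_add_outer_product:
  fixes N :: "'a::comm_ring_1^'n^'n"
  shows "det (N + outer_product y z) = det N + scalar_product z (adjugate N *v y)"
proof -
  have "N + outer_product y z = (\<chi> r. if r \<in> UNIV then N $ r + y $ r *s z else N $ r)"
    by (simp add: vec_eq_iff outer_product_def)
  then have "det (N + outer_product y z) = det N + (\<Sum>k\<in>UNIV. y $ k * det (row_upd N k z))"
    using det_add_outer_product_on_rows[of UNIV N y z] by simp
  also have "\<dots> = det N + (\<Sum>k\<in>UNIV. \<Sum>j\<in>UNIV. z $ j * adjugate N $ j $ k * y $ k)"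
    by (simp add: det_row_upd scalar_product_def column_def sum_distrib_left algebra_simps)
  also have "\<dots> = det N + scalar_product z (adjugate N *v y)"
    by (subst sum.swap) (simp add: scalar_product_def matrix_vector_mult_def sum_distrib_left mult.assoc)
  finally show ?thesis .
qed

definition partial_mult :: "'n set \<Rightarrow> ('a::comm_ring_1)^'n^'n \<Rightarrow> 'a^'n^'n \<Rightarrow> 'a^'n^'n" where
  "partial_mult S Y Z = (\<chi> i j. \<Sum>s\<in>S. Y $ i $ s * Z $ s $ j)"

lemma partial_mult_empty [simp]: "partial_mult {} Y Z = 0"
  by (simp add: vec_eq_iff partial_mult_def)

lemma partial_mult_UNIV [simp]: "partial_mult UNIV Y Z = Y ** Z"
  by (simp add: vec_eq_iff partial_mult_def matrix_matrix_mult_def)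

lemma partial_mult_remove:
  assumes "s \<in> S"
  shows "partial_mult S Y Z = partial_mult (S - {s}) Y Z + outer_product (column s Y) (row s Z)"
  using assms by (simp add: vec_eq_iff partial_mult_def outer_product_def column_def row_def sum.remove)

text \<open>\<open>partial_mult S Y Z\<close> is a sum of \<open>|S|\<close> rank-one matrices, and every such sum has this
form; so \<open>kills_perturbed_dets x A k\<close> says that \<open>x\<close> kills \<open>det (W A + L)\<close> for every \<open>W\<close> and
every \<open>L\<close> of rank at most \<open>k\<close>.\<close>

definition kills_perturbed_dets :: "'a \<Rightarrow> ('a::comm_ring_1)^'n^'n \<Rightarrow> nat \<Rightarrow> bool" where
  "kills_perturbed_dets x A k \<longleftrightarrow>
     (\<forall>W S Y Z. card S \<le> k \<longrightarrow> x * det (W ** A + partial_mult S Y Z) = 0)"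

lemma kills_perturbed_dets_mult:
  "kills_perturbed_dets x A k \<Longrightarrow> kills_perturbed_dets (t * x) A k"
  unfolding kills_perturbed_dets_def by (metis mult.assoc mult_zero_right)

lemma kills_perturbed_dets_0:
  fixes A :: "'a::comm_ring_1^'n^'n"
  assumes "x * det A = 0"
  shows "kills_perturbed_dets x A 0"
  using assms unfolding kills_perturbed_dets_def
  by (auto simp: det_mul) (metis mult.left_commute mult_zero_right)

lemma kills_perturbed_dets_CARD:
  fixes A :: "'a::comm_ring_1^'n^'n"
  assumes "kills_perturbed_dets x A k" "CARD('n) \<le> k"
  shows "x = 0"
  using assms unfolding kills_perturbed_dets_def
  by (metis det_I matrix_mul_lid mult.right_neutral partial_mult_UNIV times0_left add_0)

lemma outer_product_mult: "outer_product y z ** A = outer_product y (z v* A)"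
  by (simp add: vec_eq_iff outer_product_def matrix_matrix_mult_def vector_matrix_mult_def
      sum_distrib_left mult.assoc)

lemma matrix_add_rdistrib: "(A + B) ** C = A ** C + B ** C"
  by (simp add: vec_eq_iff matrix_matrix_mult_def distrib_right sum.distrib)

lemma axis_vector_matrix_mult: "axis i 1 v* A = row i A"
  by (simp add: vec_eq_iff vector_matrix_mult_def axis_def row_def if_distrib if_distribR cong: if_cong)

lemma kernel_vector_of_perturbed_det:
  fixes A :: "'a::comm_ring_1^'n^'n"
  assumes kills: "kills_perturbed_dets x A a" and card: "card S \<le> Suc a"
  obtains h z where "\<And>i. x * (A *v h) $ i = 0"
    and "x * scalar_product z h = x * det (W ** A + partial_mult S Y Z)"
proof (cases "S = {}")
  case True
  then have "x * det (W ** A + partial_mult S Y Z) = 0"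
    using kills unfolding kills_perturbed_dets_def by (metis card.empty zero_le)
  then show ?thesis by (intro that[of 0 0]) (simp_all add: scalar_product_def)
next
  case False
  then obtain s where s: "s \<in> S" by blast
  define N where "N = W ** A + partial_mult (S - {s}) Y Z"
  define y where "y = column s Y"
  have card': "card (S - {s}) \<le> a" using card s by (simp add: card_Diff_singleton)
  have killsN: "x * det (N + outer_product y v) = x * scalar_product v (adjugate N *v y)" for v
  proof -
    have "x * det N = 0" using kills card' unfolding kills_perturbed_dets_def N_def by blast
    then show ?thesis by (simp add: det_add_outer_product distrib_left)
  qed
  show ?thesis
  proof (rule that)
    fix i
    have "N + outer_product y (row i A) = (W + outer_product y (axis i 1)) ** A + partial_mult (S - {s}) Y Z"
      by (simp add: N_def matrix_add_rdistrib outer_product_mult axis_vector_matrix_mult ac_simps)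
    then have "x * det (N + outer_product y (row i A)) = 0"
      using kills card' unfolding kills_perturbed_dets_def by presburger
    then show "x * (A *v (adjugate N *v y)) $ i = 0"
      by (simp add: killsN scalar_product_def matrix_vector_mult_def row_def)
  next
    have "W ** A + partial_mult S Y Z = N + outer_product y (row s Z)"
      by (simp add: N_def y_def partial_mult_remove[OF s] ac_simps)
    then show "x * scalar_product (row s Z) (adjugate N *v y) = x * det (W ** A + partial_mult S Y Z)"
      by (simp add: killsN)
  qed
qed

definition has_two_sided_annihilator :: "'a \<Rightarrow> ('a::comm_ring_1)^'n^'n \<Rightarrow> bool" where
  "has_two_sided_annihilator x A \<longleftrightarrow>
     (\<exists>X. X \<noteq> 0 \<and> A ** X = 0 \<and> X ** A = 0 \<and> (\<forall>i j. ann x \<subseteq> ann (X $ i $ j)))"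

lemma has_two_sided_annihilator_mult:
  "has_two_sided_annihilator (x * t) A \<Longrightarrow> has_two_sided_annihilator x A"
proof -
  have "ann x \<subseteq> ann (x * t)"
    by (auto simp: ann_def) (metis mult.assoc mult.commute mult_zero_right)
  then show "has_two_sided_annihilator (x * t) A \<Longrightarrow> has_two_sided_annihilator x A"
    unfolding has_two_sided_annihilator_def by blast
qed

lemma has_two_sided_annihilator_outer_product:
  fixes A :: "'a::comm_ring_1^'n^'n"
  assumes "\<And>i. x * (A *v h) $ i = 0" and "\<And>j. x * (q v* A) $ j = 0"
    and "x * scalar_product z h * scalar_product y q \<noteq> 0"
  shows "has_two_sided_annihilator x A"
  unfolding has_two_sided_annihilator_def
proof (intro exI conjI allI)
  let ?X = "outer_product (x *s h) q"
  have "(A ** ?X) $ i $ j = q $ j * (x * (A *v h) $ i)" for i j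
    by (simp add: matrix_matrix_mult_def outer_product_def matrix_vector_mult_def
        sum_distrib_left ac_simps)
  then show "A ** ?X = 0"
    using assms(1) by (simp add: vec_eq_iff)
  have "(?X ** A) $ i $ j = h $ i * (x * (q v* A) $ j)" for i j
    by (simp add: matrix_matrix_mult_def outer_product_def vector_matrix_mult_def
        sum_distrib_left ac_simps)
  then show "?X ** A = 0"
    using assms(2) by (simp add: vec_eq_iff)
  show "ann x \<subseteq> ann (?X $ i $ j)" for i j
    by (auto simp: ann_def outer_product_def) (metis mult.assoc mult.commute mult_zero_left)
  show "?X \<noteq> 0"
  proof
    assume "?X = 0"
    then have "(\<Sum>i\<in>UNIV. \<Sum>j\<in>UNIV. z $ i * ?X $ i $ j * y $ j) = 0" by simp
    moreover have "(\<Sum>i\<in>UNIV. \<Sum>j\<in>UNIV. z $ i * ?X $ i $ j * y $ j)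
        = x * scalar_product z h * scalar_product y q"
      by (simp add: outer_product_def scalar_product_def sum_distrib_left sum_distrib_right ac_simps)
    ultimately show False using assms(3) by simp
  qed
qed

lemma has_two_sided_annihilator_if_kills_perturbed_dets:
  fixes A :: "'a::comm_ring_1^'n^'n"
  assumes "kills_perturbed_dets x A a" "kills_perturbed_dets x (transpose A) b" "x \<noteq> 0"
  shows "has_two_sided_annihilator x A"
  using assms
proof (induction "2 * CARD('n) - (a + b)" arbitrary: a b x rule: less_induct)
  \<comment> \<open>Either the invariant extends to rank \<open>a + 1\<close> (resp. \<open>b + 1\<close>) for \<open>x\<close> or a multiple of it,
    or the failing perturbations supply \<open>h\<close> and \<open>q\<close>; both ranks stay below \<open>n\<close>.\<close>
  case less
  have "a < CARD('n)" "b < CARD('n)"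
    using kills_perturbed_dets_CARD less.prems by (metis not_less)+
  then have measure: "2 * CARD('n) - (Suc a + b) < 2 * CARD('n) - (a + b)"
    "2 * CARD('n) - (a + Suc b) < 2 * CARD('n) - (a + b)" by auto
  show ?case
  proof (cases "kills_perturbed_dets x A (Suc a)")
    case True
    then show ?thesis using less.hyps[OF measure(1)] less.prems by blast
  next
    case False
    then obtain W S Y Z where card: "card S \<le> Suc a"
      and d: "x * det (W ** A + partial_mult S Y Z) \<noteq> 0" (is "x * ?d \<noteq> 0")
      unfolding kills_perturbed_dets_def by blast
    obtain h z where h: "\<And>i. x * (A *v h) $ i = 0" and hz: "x * scalar_product z h = x * ?d"
      using kernel_vector_of_perturbed_det[OF less.prems(1) card] by blast
    show ?thesis
    proof (cases "kills_perturbed_dets (?d * x) (transpose A) (Suc b)")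
      case True
      then have "has_two_sided_annihilator (?d * x) A"
        using less.hyps[OF measure(2)] less.prems d kills_perturbed_dets_mult
        by (metis mult.commute)
      then show ?thesis
        using has_two_sided_annihilator_mult by (metis mult.commute)
    next
      case False
      then obtain W' S' Y' Z' where card': "card S' \<le> Suc b"
        and d': "?d * x * det (W' ** transpose A + partial_mult S' Y' Z') \<noteq> 0" (is "?d * x * ?d' \<noteq> 0")
        unfolding kills_perturbed_dets_def by blast
      obtain q y where q: "\<And>j. x * (transpose A *v q) $ j = 0"
        and qy: "x * scalar_product y q = x * ?d'"
        using kernel_vector_of_perturbed_det[OF less.prems(2) card'] by blast
      have "x * scalar_product z h * scalar_product y q = ?d * x * ?d'"
        using hz qy by (metis mult.assoc mult.commute)
      with d' have "x * scalar_product z h * scalar_product y q \<noteq> 0" by simp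
      with h q show ?thesis
        by (intro has_two_sided_annihilator_outer_product) simp_all
    qed
  qed
qed

lemma has_two_sided_annihilator_if_ann_det:
  fixes A :: "'a::comm_ring_1^'n^'n"
  assumes "x \<noteq> 0" "x * det A = 0"
  shows "has_two_sided_annihilator x A"
  using assms kills_perturbed_dets_0[of x A] kills_perturbed_dets_0[of x "transpose A"]
  by (intro has_two_sided_annihilator_if_kills_perturbed_dets) auto

lemma two_sided_zd_ann_det:
  fixes A :: "'a::comm_ring_1^'n^'n"
  assumes "two_sided_zd A"
  obtains w where "w \<noteq> 0" "w * det A = 0"
proof -
  obtain B :: "'a^'n^'n" where B: "B \<noteq> 0" "A ** B = 0"
    using assms unfolding two_sided_zd_def by blast
  then obtain i j where "B $ i $ j \<noteq> 0"
    by (metis vec_eq_iff zero_index)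
  moreover have "B $ i $ j * det A = 0"
    using det_mult_entry_eq_0[OF B(2)] by (simp add: mult.commute)
  ultimately show ?thesis using that by blast
qed

lemma mult_eq_0_if_entries_ann:
  fixes X Y :: "'a::comm_ring_1^'n^'n"
  assumes "\<And>i k. v * X $ i $ k = 0" and "\<And>l j. ann v \<subseteq> ann (Y $ l $ j)"
  shows "X ** Y = 0" "Y ** X = 0"
proof -
  have "X $ i $ k \<in> ann (Y $ l $ j)" for i k l j
    using assms unfolding ann_def by blast
  then have "X $ i $ k * Y $ l $ j = 0" for i k l j
    by (simp add: ann_def mult.commute)
  then show "X ** Y = 0" "Y ** X = 0"
    by (simp_all add: vec_eq_iff matrix_matrix_mult_def mult.commute)
qed

definition orth_bridge :: "('a::comm_ring_1)^'n^'n \<Rightarrow> 'a^'n^'n \<Rightarrow> bool" where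
  "orth_bridge A B \<longleftrightarrow> (\<exists>X Y. X \<noteq> 0 \<and> Y \<noteq> 0 \<and> A ** X = 0 \<and> X ** A = 0 \<and>
     X ** Y = 0 \<and> Y ** X = 0 \<and> Y ** B = 0 \<and> B ** Y = 0)"

lemma orth_bridge_if_ann_det_not_subset:
  fixes A B :: "'a::comm_ring_1^'n^'n"
  assumes "two_sided_zd A" "z * det B = 0" "z * det A \<noteq> 0"
  shows "orth_bridge A B"
proof -
  obtain w where "w \<noteq> 0" "w * det A = 0"
    using two_sided_zd_ann_det[OF assms(1)] by blast
  then obtain X where X: "X \<noteq> 0" "A ** X = 0" "X ** A = 0"
    using has_two_sided_annihilator_if_ann_det unfolding has_two_sided_annihilator_def by blast
  have "z * det A * det B = 0"
    using assms(2) by (metis mult.assoc mult.left_commute mult_zero_right)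
  then obtain Y where Y: "Y \<noteq> 0" "B ** Y = 0" "Y ** B = 0" "\<And>l j. ann (z * det A) \<subseteq> ann (Y $ l $ j)"
    using has_two_sided_annihilator_if_ann_det[OF assms(3)]
    unfolding has_two_sided_annihilator_def by blast
  have "z * det A * X $ i $ k = 0" for i k
    using det_mult_entry_eq_0[OF X(2)] by (metis mult.assoc mult_zero_right)
  then have "X ** Y = 0" "Y ** X = 0"
    using mult_eq_0_if_entries_ann Y(4) by blast+
  with X Y show ?thesis
    unfolding orth_bridge_def by blast
qed

lemma orth_bridge_if_ann_det_mult_eq_0:
  fixes A B :: "'a::comm_ring_1^'n^'n"
  assumes "x \<noteq> 0" "y \<noteq> 0" "x * det A = 0" "y * det B = 0" "x * y = 0"
  shows "orth_bridge A B"
proof -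
  obtain X where X: "X \<noteq> 0" "A ** X = 0" "X ** A = 0" "\<And>i k. ann x \<subseteq> ann (X $ i $ k)"
    using has_two_sided_annihilator_if_ann_det[OF assms(1,3)]
    unfolding has_two_sided_annihilator_def by blast
  obtain Y where Y: "Y \<noteq> 0" "B ** Y = 0" "Y ** B = 0" "\<And>l j. ann y \<subseteq> ann (Y $ l $ j)"
    using has_two_sided_annihilator_if_ann_det[OF assms(2,4)]
    unfolding has_two_sided_annihilator_def by blast
  have "y * X $ i $ k = 0" for i k
    using X(4)[of i k] assms(5) by (auto simp: ann_def mult.commute)
  then have "X ** Y = 0" "Y ** X = 0"
    using mult_eq_0_if_entries_ann Y(4) by blast+
  with X Y show ?thesis
    unfolding orth_bridge_def by blast
qed

lemma orth_walk_extend: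
  assumes "\<exists>j\<le>k. (orth_adj ^^ j) A B" "B = C \<or> orth_adj B C"
  shows "\<exists>j\<le>Suc k. (orth_adj ^^ j) A C"
proof -
  obtain j where j: "j \<le> k" "(orth_adj ^^ j) A B" using assms(1) by blast
  show ?thesis
  proof (cases "B = C")
    case True
    with j show ?thesis by (intro exI[of _ j]) auto
  next
    case False
    with assms(2) j have "(orth_adj ^^ Suc j) A C" by (auto intro: relpowp_Suc_I)
    with j show ?thesis by (intro exI[of _ "Suc j"]) auto
  qed
qed

lemma orth_dist_le_3_if_orth_bridge:
  fixes A B :: "'a::comm_ring_1^'n^'n"
  assumes "two_sided_zd A" "two_sided_zd B" "orth_bridge A B"
  shows "orth_dist A B \<le> 3"
proof -
  obtain X Y where XY: "X \<noteq> 0" "Y \<noteq> 0" "A ** X = 0" "X ** A = 0"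
      "X ** Y = 0" "Y ** X = 0" "Y ** B = 0" "B ** Y = 0"
    using assms(3) unfolding orth_bridge_def by blast
  have "A \<noteq> 0" "B \<noteq> 0" using assms(1,2) unfolding two_sided_zd_def by auto
  with XY have "two_sided_zd X" "two_sided_zd Y"
    unfolding two_sided_zd_def by (intro conjI; blast)+
  with assms(1,2) XY have AX: "A = X \<or> orth_adj A X" and XY': "X = Y \<or> orth_adj X Y"
    and YB: "Y = B \<or> orth_adj Y B"
    unfolding orth_adj_def by auto
  have "\<exists>j\<le>0. (orth_adj ^^ j) A A" by auto
  then have "\<exists>j\<le>Suc (Suc (Suc 0)). (orth_adj ^^ j) A B"
    by (rule orth_walk_extend[OF orth_walk_extend[OF orth_walk_extend[OF _ AX] XY'] YB])
  then have "\<exists>j\<le>3. (orth_adj ^^ j) A B" by (simp add: numeral_3_eq_3)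
  then obtain j where "j \<le> 3" "(orth_adj ^^ j) A B" by blast
  then have "orth_dist A B \<le> enat j"
    unfolding orth_dist_def by (intro INF_lower) simp
  also have "\<dots> \<le> 3" using \<open>j \<le> 3\<close> by (simp add: numeral_eq_enat)
  finally show ?thesis .
qed

theorem lemma4:
  fixes A1 A2 :: "('a::comm_ring_1)^'n^'n"
  assumes "CARD('n) > 1"
    and "two_sided_zd A1" and "two_sided_zd A2"
    and "orth_dist A1 A2 > 3"
  shows "ann (det A1) = ann (det A2) \<and>
         (\<forall>x\<in>ann (det A1). \<forall>y\<in>ann (det A1). x \<noteq> 0 \<and> y \<noteq> 0 \<longrightarrow> x * y \<noteq> 0)"
proof -
  have no_bridge: "\<not> orth_bridge A1 A2"
    using orth_dist_le_3_if_orth_bridge[OF assms(2,3)] assms(4) by (meson not_le)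
  have sym: "orth_bridge A2 A1 \<Longrightarrow> orth_bridge A1 A2"
    unfolding orth_bridge_def by blast
  have "z * det A2 = 0 \<longleftrightarrow> z * det A1 = 0" for z
    using orth_bridge_if_ann_det_not_subset[OF assms(2), of z A2]
      orth_bridge_if_ann_det_not_subset[OF assms(3), of z A1] no_bridge sym by blast
  then have ann_eq: "ann (det A1) = ann (det A2)"
    by (auto simp: ann_def mult.commute)
  have "x * y \<noteq> 0" if "x \<in> ann (det A1)" "y \<in> ann (det A1)" "x \<noteq> 0" "y \<noteq> 0" for x y
    using orth_bridge_if_ann_det_mult_eq_0[OF that(3,4), of A1 A2] that ann_eq no_bridge
    by (auto simp: ann_def mult.commute)
  with ann_eq show ?thesis by blast
qed

end
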